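(* For $n\ge 1$, the number of edges of $\mathcal{SP}_L(IS_n)$ is $$\frac12\left((2^n-1)^2-(3^n-2^n)\right).$$
   Context: $IS_n$ is the set of all partial injective maps of an $n$-element set $X$, with composition written left to right ($\alpha\beta$ means first $\alpha$, then $\beta$); its zero is the empty map. For $a\in IS_n$, $S^1a=\{sa:s\in IS_n\}\cup\{a\}$. $\mathcal{P}_L(IS_n)$ is the simple graph on the non-empty partial injections with distinct $a,b$ adjacent iff $S^1a\cap S^1b$ contains a non-empty map. $L_a$ is the Green $\mathcal{L}$-class of $a$ ($a\,\mathcal{L}\,b$ iff $S^1a=S^1b$). $\mathcal{SP}_L(IS_n)$ is the simple graph with vertex set $\{L_a: a \text{ non-empty}\}$, distinct $L_a,L_b$ adjacent iff $a,b$ are adjacent in $\mathcal{P}_L(IS_n)$. *)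

theory Defs
  imports Complex_Main
begin

type_synonym pmap = "nat \<Rightarrow> nat option"

definition IS :: "nat \<Rightarrow> pmap set" where
  "IS n = {f. dom f \<subseteq> {..<n} \<and> ran f \<subseteq> {..<n} \<and> inj_on f (dom f)}"

text \<open>Left-to-right composition: pcomp a b means first a, then b.\<close>
definition pcomp :: "pmap \<Rightarrow> pmap \<Rightarrow> pmap" where
  "pcomp a b = b \<circ>\<^sub>m a"

definition S1 :: "nat \<Rightarrow> pmap \<Rightarrow> pmap set" where
  "S1 n a = {pcomp s a | s. s \<in> IS n} \<union> {a}"

definition PL_adj :: "nat \<Rightarrow> pmap \<Rightarrow> pmap \<Rightarrow> bool" where
  "PL_adj n a b \<longleftrightarrow> a \<in> IS n \<and> b \<in> IS n \<and> a \<noteq> Map.empty \<and> b \<noteq> Map.empty \<and> a \<noteq> b \<and>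
     (\<exists>c \<in> S1 n a \<inter> S1 n b. c \<noteq> Map.empty)"

definition Lclass :: "nat \<Rightarrow> pmap \<Rightarrow> pmap set" where
  "Lclass n a = {b \<in> IS n. S1 n b = S1 n a}"

definition SPL_vertices :: "nat \<Rightarrow> pmap set set" where
  "SPL_vertices n = Lclass n ` (IS n - {Map.empty})"

definition SPL_edges :: "nat \<Rightarrow> pmap set set set" where
  "SPL_edges n = {{Lclass n a, Lclass n b} | a b. PL_adj n a b \<and> Lclass n a \<noteq> Lclass n b}"

end

theory Submission
  imports Defs "HOL-Library.FuncSet"
begin

(*
  A partial injection f with im f contained in im a factors as f = s a: pull f back along a.
  Hence S^1 a consists of the partial injections with image inside im a, so a L b iff
  im a = im b, and a, b are adjacent iff their images meet (the partial identity on a common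
  point lies in both left ideals).  Thus SP_L(IS_n) is the graph on the non-empty subsets of X
  in which distinct subsets are adjacent iff they intersect.  Of the 4^n ordered pairs of
  subsets, 3^n are disjoint and 2^n are equal, with ({},{}) counted in both; the remaining
  4^n - 3^n - 2^n + 1 ordered pairs count every edge twice.
*)

lemma ran_partial_id [simp]: "ran (Some |` A) = A"
  by (auto simp: ran_def restrict_map_def)

lemma ran_eq_empty_conv: "ran a = {} \<longleftrightarrow> a = Map.empty"
  by (auto simp: ran_def) (meson not_Some_eq)

lemma partial_id_in_IS: "A \<subseteq> {..<n} \<Longrightarrow> Some |` A \<in> IS n"
  by (auto simp: IS_def ran_def inj_on_def restrict_map_def split: if_splits)

lemma ran_pcomp_subset: "ran (pcomp s a) \<subseteq> ran a"
  by (auto simp: pcomp_def ran_def map_comp_def split: option.splits)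

lemma pcomp_in_IS:
  assumes s: "s \<in> IS n" and a: "a \<in> IS n"
  shows "pcomp s a \<in> IS n"
proof -
  have "dom (pcomp s a) \<subseteq> dom s"
    by (auto simp: pcomp_def map_comp_def split: option.splits)
  moreover have "inj_on (pcomp s a) (dom (pcomp s a))"
  proof (rule inj_onI)
    fix x y assume "x \<in> dom (pcomp s a)" "y \<in> dom (pcomp s a)" "pcomp s a x = pcomp s a y"
    then obtain u v where "s x = Some u" "s y = Some v" "a u = a v" "a u \<noteq> None"
      by (auto simp: pcomp_def map_comp_def split: option.splits)
    with s a show "x = y"
      by (auto simp: IS_def inj_on_def dom_def)
  qed
  ultimately show ?thesis
    using s a ran_pcomp_subset[of s a] by (auto simp: IS_def)
qed

lemma pcomp_factor_through_ran:
  assumes f: "f \<in> IS n" and a: "a \<in> IS n" and ran_f: "ran f \<subseteq> ran a"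
  obtains s where "s \<in> IS n" "pcomp s a = f"
proof
  define pre where "pre y = (SOME x. a x = Some y)" for y
  define s where "s = (\<lambda>y. Some (pre y)) \<circ>\<^sub>m f"
  have a_pre: "a (pre y) = Some y" if "f x = Some y" for x y
  proof -
    from that ran_f obtain z where "a z = Some y" by (auto simp: ran_def)
    then show ?thesis unfolding pre_def by (rule someI)
  qed
  show "pcomp s a = f"
  proof
    fix x show "pcomp s a x = f x"
      using a_pre[of x] by (cases "f x") (simp_all add: pcomp_def s_def)
  qed
  have "inj_on s (dom s)"
  proof (rule inj_onI)
    fix x y assume "x \<in> dom s" "y \<in> dom s" "s x = s y"
    then obtain u v where u: "f x = Some u" and v: "f y = Some v" and "pre u = pre v"
      by (auto simp: s_def map_comp_def split: option.splits)
    then have "u = v"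
      using a_pre[OF u] a_pre[OF v] by (metis option.inject)
    with f u v show "x = y"
      unfolding IS_def by (metis (mono_tags) domI inj_onD mem_Collect_eq)
  qed
  moreover have "dom s = dom f"
    by (auto simp: s_def map_comp_def split: option.splits)
  moreover have "ran s \<subseteq> dom a"
    using a_pre by (auto simp: s_def map_comp_def ran_def split: option.splits)
  ultimately show "s \<in> IS n"
    using f a unfolding IS_def by blast
qed

lemma S1_eq_ran_subset:
  assumes a: "a \<in> IS n"
  shows "S1 n a = {f \<in> IS n. ran f \<subseteq> ran a}"
proof (intro equalityI subsetI)
  fix f assume "f \<in> S1 n a"
  then show "f \<in> {f \<in> IS n. ran f \<subseteq> ran a}"
    using a pcomp_in_IS ran_pcomp_subset by (fastforce simp: S1_def)
next
  fix f assume "f \<in> {f \<in> IS n. ran f \<subseteq> ran a}"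
  then obtain s where "s \<in> IS n" "pcomp s a = f"
    using pcomp_factor_through_ran[OF _ a] by blast
  then show "f \<in> S1 n a"
    by (auto simp: S1_def)
qed

lemma S1_eq_S1_iff:
  assumes "a \<in> IS n" "b \<in> IS n"
  shows "S1 n a = S1 n b \<longleftrightarrow> ran a = ran b"
proof
  assume "S1 n a = S1 n b"
  moreover have "a \<in> S1 n a" "b \<in> S1 n b" by (simp_all add: S1_def)
  ultimately show "ran a = ran b"
    using assms by (auto simp: S1_eq_ran_subset)
qed (simp add: S1_eq_ran_subset assms)

lemma S1_inter_nonempty_iff:
  assumes "a \<in> IS n" "b \<in> IS n"
  shows "(\<exists>c \<in> S1 n a \<inter> S1 n b. c \<noteq> Map.empty) \<longleftrightarrow> ran a \<inter> ran b \<noteq> {}"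
proof
  assume "\<exists>c \<in> S1 n a \<inter> S1 n b. c \<noteq> Map.empty"
  then obtain c where c: "c \<in> S1 n a" "c \<in> S1 n b" "c \<noteq> Map.empty"
    by blast
  then have "ran c \<subseteq> ran a \<inter> ran b" "ran c \<noteq> {}"
    using assms by (auto simp: S1_eq_ran_subset ran_eq_empty_conv)
  then show "ran a \<inter> ran b \<noteq> {}" by blast
next
  assume "ran a \<inter> ran b \<noteq> {}"
  then obtain y where y: "y \<in> ran a" "y \<in> ran b" by blast
  with assms have "Some |` {y} \<in> IS n"
    by (auto simp: IS_def intro: partial_id_in_IS)
  with y assms show "\<exists>c \<in> S1 n a \<inter> S1 n b. c \<noteq> Map.empty"
    by (auto simp: S1_eq_ran_subset ran_eq_empty_conv[symmetric] intro!: bexI[of _ "Some |` {y}"])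
qed

lemma PL_adj_iff:
  "PL_adj n a b \<longleftrightarrow> a \<in> IS n \<and> b \<in> IS n \<and> a \<noteq> b \<and> ran a \<inter> ran b \<noteq> {}"
  unfolding PL_adj_def
  using S1_inter_nonempty_iff[of a n b] ran_eq_empty_conv[of a] ran_eq_empty_conv[of b] by blast

definition ran_class :: "nat \<Rightarrow> nat set \<Rightarrow> pmap set" where
  "ran_class n A = {b \<in> IS n. ran b = A}"

lemma Lclass_eq_ran_class: "a \<in> IS n \<Longrightarrow> Lclass n a = ran_class n (ran a)"
  using S1_eq_S1_iff by (auto simp: Lclass_def ran_class_def)

lemma inj_on_ran_class: "inj_on (ran_class n) (Pow {..<n})"
proof (rule inj_onI)
  fix A B assume "A \<in> Pow {..<n}" "ran_class n A = ran_class n B"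
  moreover have "Some |` A \<in> ran_class n A" if "A \<subseteq> {..<n}"
    using that by (simp add: ran_class_def partial_id_in_IS)
  ultimately have "Some |` A \<in> ran_class n B"
    by simp
  then show "A = B" by (simp add: ran_class_def)
qed

lemma card_doubletons_sym_irrefl:
  assumes "finite R" "sym R" "irrefl R"
  shows "card R = 2 * card ((\<lambda>(x, y). {x, y}) ` R)"
proof -
  let ?edge = "\<lambda>(x, y). {x, y}"
  have fibre: "{p \<in> R. ?edge p = e} = {(x, y), (y, x)}" if "(x, y) \<in> R" "e = {x, y}" for x y e
    using that assms(2) by (auto simp: doubleton_eq_iff sym_def)
  have card_fibre: "card {p \<in> R. ?edge p = e} = 2" if "e \<in> ?edge ` R" for e
  proof -
    from that obtain x y where xy: "(x, y) \<in> R" "e = {x, y}"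
      by auto
    moreover from xy(1) assms(3) have "x \<noteq> y"
      by (auto simp: irrefl_def)
    ultimately show ?thesis
      by (simp add: fibre)
  qed
  have "card R = (\<Sum>e \<in> ?edge ` R. card {p \<in> R. ?edge p = e})"
    unfolding card_eq_sum
    by (rule sum.group[OF assms(1) finite_imageI[OF assms(1)] subset_refl, symmetric])
  also have "\<dots> = 2 * card (?edge ` R)"
    by (simp add: card_fibre)
  finally show ?thesis .
qed

lemma card_disjoint_subset_pairs:
  fixes S :: "'a set"
  assumes "finite S"
  shows "card {(A, B). A \<subseteq> S \<and> B \<subseteq> S \<and> A \<inter> B = {}} = 3 ^ card S"
proof -
  let ?D = "{(A, B). A \<subseteq> S \<and> B \<subseteq> S \<and> A \<inter> B = {}}"
  let ?colourings = "S \<rightarrow>\<^sub>E {0, 1, 2 :: nat}"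
  define classes where "classes f = ({i \<in> S. f i = 0}, {i \<in> S. f i = 1})" for f :: "'a \<Rightarrow> nat"
  define colouring :: "'a set \<times> 'a set \<Rightarrow> 'a \<Rightarrow> nat" where
    "colouring = (\<lambda>(A, B). \<lambda>i. if i \<in> S then if i \<in> A then 0 else if i \<in> B then 1 else 2 else undefined)"
  have "bij_betw classes ?colourings ?D"
  proof (rule bij_betw_byWitness[where f' = colouring])
    show "\<forall>f \<in> ?colourings. colouring (classes f) = f"
      by (force simp: classes_def colouring_def PiE_iff extensional_def fun_eq_iff)
    show "\<forall>p \<in> ?D. classes (colouring p) = p"
      by (auto simp: classes_def colouring_def)
  qed (auto simp: classes_def colouring_def split: if_splits)
  then have "card ?D = card ?colourings"
    by (simp add: bij_betw_same_card)
  also have "\<dots> = 3 ^ card S"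
    using assms by (simp add: card_PiE numeral_3_eq_3)
  finally show ?thesis .
qed

definition overlapping_pairs :: "'a set \<Rightarrow> ('a set \<times> 'a set) set" where
  "overlapping_pairs S = {(A, B). A \<subseteq> S \<and> B \<subseteq> S \<and> A \<noteq> B \<and> A \<inter> B \<noteq> {}}"

lemma card_overlapping_pairs:
  assumes "finite S"
  shows "card (overlapping_pairs S) + 3 ^ card S + 2 ^ card S = 4 ^ card S + 1"
proof -
  define D where "D = {(A, B). A \<subseteq> S \<and> B \<subseteq> S \<and> A \<inter> B = {}}"
  define diagonal where "diagonal = (\<lambda>A. (A, A)) ` Pow S"
  have partition: "Pow S \<times> Pow S = overlapping_pairs S \<union> (D \<union> diagonal)"
    by (auto simp: overlapping_pairs_def D_def diagonal_def)
  have disjoint: "overlapping_pairs S \<inter> (D \<union> diagonal) = {}"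
    by (auto simp: overlapping_pairs_def D_def diagonal_def)
  have finite: "finite (Pow S \<times> Pow S)"
    using assms by simp
  have "4 ^ card S = card (Pow S \<times> Pow S)"
    using assms by (simp add: card_cartesian_product card_Pow flip: power_mult_distrib)
  also have "\<dots> = card (overlapping_pairs S) + card (D \<union> diagonal)"
    using finite disjoint unfolding partition by (intro card_Un_disjoint) auto
  finally have "4 ^ card S = card (overlapping_pairs S) + card (D \<union> diagonal)" .
  moreover have "card D + card diagonal = card (D \<union> diagonal) + card (D \<inter> diagonal)"
    using finite partition by (intro card_Un_Int) (auto intro: finite_subset)
  moreover have "D \<inter> diagonal = {({}, {})}"
    by (auto simp: D_def diagonal_def)
  moreover have "card D = 3 ^ card S"
    unfolding D_def using assms by (rule card_disjoint_subset_pairs)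
  moreover have "card diagonal = 2 ^ card S"
    using assms by (simp add: diagonal_def card_image inj_on_def card_Pow)
  ultimately show ?thesis
    by simp
qed

definition intersection_edges :: "'a set \<Rightarrow> 'a set set set" where
  "intersection_edges S = (\<lambda>(A, B). {A, B}) ` overlapping_pairs S"

lemma card_overlapping_pairs_eq_twice_edges:
  assumes "finite S"
  shows "card (overlapping_pairs S) = 2 * card (intersection_edges S)"
  unfolding intersection_edges_def
proof (rule card_doubletons_sym_irrefl)
  show "finite (overlapping_pairs S)"
    using assms by (auto simp: overlapping_pairs_def intro: finite_subset[of _ "Pow S \<times> Pow S"])
qed (auto simp: overlapping_pairs_def sym_def irrefl_def)

lemma SPL_edges_eq: "SPL_edges n = (`) (ran_class n) ` intersection_edges {..<n}"
proof (intro equalityI subsetI)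
  fix e assume "e \<in> SPL_edges n"
  then obtain a b where e: "e = {Lclass n a, Lclass n b}" and adj: "PL_adj n a b"
    and distinct: "Lclass n a \<noteq> Lclass n b"
    by (auto simp: SPL_edges_def)
  from adj have IS: "a \<in> IS n" "b \<in> IS n" and "ran a \<inter> ran b \<noteq> {}"
    by (simp_all add: PL_adj_iff)
  moreover from IS distinct have "ran a \<noteq> ran b"
    by (auto simp: Lclass_eq_ran_class)
  ultimately have "{ran a, ran b} \<in> intersection_edges {..<n}"
    unfolding intersection_edges_def by (force simp: overlapping_pairs_def IS_def)
  moreover have "e = ran_class n ` {ran a, ran b}"
    using e IS by (simp add: Lclass_eq_ran_class)
  ultimately show "e \<in> (`) (ran_class n) ` intersection_edges {..<n}"
    by blast
next
  fix e assume "e \<in> (`) (ran_class n) ` intersection_edges {..<n}"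
  then obtain A B where e: "e = {ran_class n A, ran_class n B}"
    and AB: "(A, B) \<in> overlapping_pairs {..<n}"
    by (auto simp: intersection_edges_def)
  then have IS: "Some |` A \<in> IS n" "Some |` B \<in> IS n"
    by (auto simp: overlapping_pairs_def intro: partial_id_in_IS)
  from AB have "A \<noteq> B" "A \<inter> B \<noteq> {}" "A \<in> Pow {..<n}" "B \<in> Pow {..<n}"
    by (auto simp: overlapping_pairs_def)
  then have "PL_adj n (Some |` A) (Some |` B)"
    using IS by (auto simp: PL_adj_iff dest: arg_cong[of _ _ ran])
  moreover have "Lclass n (Some |` A) \<noteq> Lclass n (Some |` B)"
    using IS \<open>A \<noteq> B\<close> \<open>A \<in> Pow {..<n}\<close> \<open>B \<in> Pow {..<n}\<close>
    by (simp add: Lclass_eq_ran_class inj_on_eq_iff[OF inj_on_ran_class])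
  moreover have "e = {Lclass n (Some |` A), Lclass n (Some |` B)}"
    using e IS by (simp add: Lclass_eq_ran_class)
  ultimately show "e \<in> SPL_edges n"
    by (auto simp: SPL_edges_def)
qed

lemma card_SPL_edges: "card (SPL_edges n) = card (intersection_edges {..<n})"
  unfolding SPL_edges_eq
  by (intro card_image inj_on_image inj_on_subset[OF inj_on_ran_class])
    (auto simp: intersection_edges_def overlapping_pairs_def)

theorem mainTheorem15:
  fixes n :: nat
  assumes "n \<ge> 1"
  shows "real (card (SPL_edges n)) = (((2::real) ^ n - 1) ^ 2 - (3 ^ n - 2 ^ n)) / 2"
proof -
  have "2 * card (SPL_edges n) + 3 ^ n + 2 ^ n = 4 ^ n + 1"
    using card_overlapping_pairs[of "{..<n}"] card_overlapping_pairs_eq_twice_edges[of "{..<n}"]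
    by (simp add: card_SPL_edges)
  then have "real (2 * card (SPL_edges n) + 3 ^ n + 2 ^ n) = real (4 ^ n + 1)"
    by (rule arg_cong)
  then have "2 * real (card (SPL_edges n)) + 3 ^ n + 2 ^ n = 4 ^ n + 1"
    by (simp only: of_nat_add of_nat_mult of_nat_power of_nat_numeral of_nat_1)
  moreover have "(4::real) ^ n = (2 ^ n) ^ 2"
    by (simp add: power2_eq_square flip: power_mult_distrib)
  ultimately show ?thesis
    by (simp add: field_simps power2_eq_square)
qed

end
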